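(* Let $n,m\ge 2$ and let $\mathsf{R}=(\mathsf{R}_1,\dots,\mathsf{R}_m)\in(0,1]^m$. Consider the game $\mathcal{G}_{\rm perfect}$ in which each of the $n$ players $P_1,\dots,P_n$ chooses a mixed strategy $s^{(i)}=(s^{(i)}_1,\dots,s^{(i)}_m)\in\Delta_m$ (a probability vector over the $m$ servers) and receives expected utility $$u_i(s^{(1)},\dots,s^{(n)})=\sum_{j=1}^m \mathsf{R}_j\,\frac{s^{(i)}_j}{\sum_{k=1}^n s^{(k)}_j},$$ where a term with vanishing denominator is taken to be $0$. Then $\mathcal{G}_{\rm perfect}$ has a unique Nash equilibrium, namely the symmetric profile $s^*=(s^{*(1)},\dots,s^{*(n)})$ with $s^{*(i)}=\mathsf{N}(\mathsf{R})$ for every $i\in[n]$.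
   Context: For a nonzero vector $v\in[0,\infty)^m$, $\mathsf{N}(v)=\big(v_1/\|v\|_1,\dots,v_m/\|v\|_1\big)$ denotes its $L_1$-normalization. $\Delta_m=\{x\in[0,1]^m:\sum_j x_j=1\}$. Interpretation: $\mathsf{R}_j$ is the trustworthiness (probability of correct behaviour) of server $j$, known to all players (perfect information); the utility is the expected reward when server $j$ yields a unit reward with probability $\mathsf{R}_j$, split among players in proportion to their endorsement probabilities of server $j$. (In the paper's full game players may also endorse other players, but such actions are dominated; the game above is the resulting game with actions restricted to the servers.) A Nash equilibrium is a profile of mixed strategies in which no player can increase her expected utility by unilaterally changing her strategy. *)

theory Defs
  imports Complex_Main
begin

text \<open>Players are indexed by 0..<n, servers by 0..<m.
  A strategy profile is s :: nat => nat => real, where s i j is the probability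
  with which player i endorses server j.\<close>

definition simplex :: "nat \<Rightarrow> (nat \<Rightarrow> real) \<Rightarrow> bool" where
  "simplex m x \<longleftrightarrow> (\<forall>j<m. 0 \<le> x j \<and> x j \<le> 1) \<and> (\<Sum>j<m. x j) = 1"

definition l1_normalize :: "nat \<Rightarrow> (nat \<Rightarrow> real) \<Rightarrow> (nat \<Rightarrow> real)" where
  "l1_normalize m v = (\<lambda>j. v j / (\<Sum>k<m. \<bar>v k\<bar>))"

text \<open>Expected utility of player i; division by 0 yields 0 in Isabelle/HOL,
  matching the convention that terms with vanishing denominator are 0.\<close>
definition utility :: "nat \<Rightarrow> nat \<Rightarrow> (nat \<Rightarrow> real) \<Rightarrow> (nat \<Rightarrow> nat \<Rightarrow> real) \<Rightarrow> nat \<Rightarrow> real" where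
  "utility n m R s i = (\<Sum>j<m. R j * (s i j / (\<Sum>k<n. s k j)))"

definition nash_eq :: "nat \<Rightarrow> nat \<Rightarrow> (nat \<Rightarrow> real) \<Rightarrow> (nat \<Rightarrow> nat \<Rightarrow> real) \<Rightarrow> bool" where
  "nash_eq n m R s \<longleftrightarrow>
     (\<forall>i<n. simplex m (s i)) \<and>
     (\<forall>i<n. \<forall>t. simplex m t \<longrightarrow> utility n m R (s(i := t)) i \<le> utility n m R s i)"

end

theory Submission
  imports Defs
begin

text \<open>Each player's utility is concave in her own strategy, and in the symmetric profile
  \<open>N(R)\<close> the tangent-line bound shows that no deviation pays off, so \<open>N(R)\<close> is an equilibrium.
  Conversely, in any equilibrium every server carries positive load (otherwise moving a little
  mass onto an empty server would win its whole reward), and first-order conditions on the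
  one-sided derivative \<open>R\<^sub>j (T\<^sub>j - s\<^sub>i\<^sub>j) / T\<^sub>j\<^sup>2\<close> (\<open>T\<^sub>j\<close> the load of server \<open>j\<close>) force all
  players to play the same strategy \<open>x\<close>; for that strategy the derivative is proportional to
  \<open>R\<^sub>j / x\<^sub>j\<close>, which must therefore be constant, i.e. \<open>x = N(R)\<close>.\<close>

abbreviation load :: "nat \<Rightarrow> (nat \<Rightarrow> nat \<Rightarrow> real) \<Rightarrow> nat \<Rightarrow> real" where
  "load n s j \<equiv> \<Sum>k<n. s k j"

definition marginal_utility ::
    "nat \<Rightarrow> (nat \<Rightarrow> real) \<Rightarrow> (nat \<Rightarrow> nat \<Rightarrow> real) \<Rightarrow> nat \<Rightarrow> nat \<Rightarrow> real" where
  "marginal_utility n R s i j = R j * (load n s j - s i j) / (load n s j)\<^sup>2"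

lemma simplex_iff_nonneg_sum:
  "simplex m x \<longleftrightarrow> (\<forall>j<m. 0 \<le> x j) \<and> (\<Sum>j<m. x j) = 1"
proof -
  have "x j \<le> (\<Sum>j<m. x j)" if "\<forall>j<m. 0 \<le> x j" "j < m" for j
    using that by (intro member_le_sum) auto
  then show ?thesis unfolding simplex_def by auto
qed

lemma sum_fun_upd_lessThan:
  fixes s :: "nat \<Rightarrow> 'a \<Rightarrow> 'b::ab_group_add"
  assumes "i < n"
  shows "(\<Sum>k<n. (s(i := t)) k j) = (\<Sum>k<n. s k j) - s i j + t j"
proof -
  have "(\<Sum>k<n. (s(i := t)) k j) = (\<Sum>k<n. s k j + (if k = i then t j - s i j else 0))"
    by (rule sum.cong) auto
  also have "\<dots> = (\<Sum>k<n. s k j) - s i j + t j"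
    using assms by (simp add: sum.distrib)
  finally show ?thesis .
qed

lemma utility_fun_upd:
  assumes "i < n"
  shows "utility n m R (s(i := t)) i = (\<Sum>j<m. R j * (t j / (load n s j - s i j + t j)))"
  unfolding utility_def sum_fun_upd_lessThan[OF assms] by simp

lemma nash_eq_simplex:
  assumes "nash_eq n m R s" "i < n"
  shows "\<forall>j<m. 0 \<le> s i j" "(\<Sum>j<m. s i j) = 1"
  using assms unfolding nash_eq_def simplex_iff_nonneg_sum by auto

lemma nonpos_of_limit_at_right:
  fixes f :: "real \<Rightarrow> real"
  assumes "(f \<longlongrightarrow> L) (at_right 0)" "0 < d" "\<And>e. 0 < e \<Longrightarrow> e < d \<Longrightarrow> f e \<le> 0"
  shows "L \<le> 0"
proof (rule tendsto_upperbound[OF assms(1)])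
  show "eventually (\<lambda>e. f e \<le> 0) (at_right 0)"
    unfolding eventually_at_right_field using assms(2,3) by auto
qed simp

lemma nash_eq_shift_le:
  assumes N: "nash_eq n m R s" and i: "i < n" and j: "j < m" and k: "k < m" and "j \<noteq> k"
    and e: "0 < e" "e \<le> s i j"
  shows "R k * ((s i k + e) / (load n s k + e) - s i k / load n s k)
       \<le> R j * (s i j / load n s j - (s i j - e) / (load n s j - e))"
proof -
  define t where "t = (\<lambda>l. s i l - (if l = j then e else 0) + (if l = k then e else 0))"
  have "simplex m t"
    using nash_eq_simplex[OF N i] j k e \<open>j \<noteq> k\<close>
    by (auto simp: simplex_iff_nonneg_sum t_def sum.distrib sum_subtractf)
  then have "utility n m R (s(i := t)) i \<le> utility n m R s i"
    using N i unfolding nash_eq_def by blast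
  moreover have "utility n m R (s(i := t)) i - utility n m R (s(i := s i)) i
      = (\<Sum>l<m. (if l = k then R k * ((s i k + e) / (load n s k + e) - s i k / load n s k) else 0)
           - (if l = j then R j * (s i j / load n s j - (s i j - e) / (load n s j - e)) else 0))"
    unfolding utility_fun_upd[OF i] sum_subtractf[symmetric]
    by (rule sum.cong) (use \<open>j \<noteq> k\<close> in \<open>auto simp: t_def right_diff_distrib\<close>)
  ultimately show ?thesis
    using j k by (simp add: sum_subtractf)
qed

lemma nash_eq_load_pos:
  assumes N: "nash_eq n m R s" and "0 < n" and R: "\<forall>j<m. 0 < R j" and j: "j < m"
  shows "0 < load n s j"
proof (rule ccontr)
  have nonneg: "\<And>q l. q < n \<Longrightarrow> l < m \<Longrightarrow> 0 \<le> s q l"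
    using nash_eq_simplex(1)[OF N] by blast
  assume "\<not> 0 < load n s j"
  then have load0: "load n s j = 0"
    using sum_nonneg[of "{..<n}" "\<lambda>q. s q j"] nonneg j by force
  then have s0j: "s 0 j = 0"
    using sum_nonneg_eq_0_iff[of "{..<n}" "\<lambda>q. s q j"] nonneg j \<open>0 < n\<close> by auto
  obtain l where l: "l < m" "0 < s 0 l"
  proof -
    have "(\<Sum>l<m. s 0 l) \<noteq> 0" using nash_eq_simplex(2)[OF N \<open>0 < n\<close>] by simp
    then obtain l where "l < m" "s 0 l \<noteq> 0" by (meson lessThan_iff sum.neutral)
    then show thesis using that nonneg[OF \<open>0 < n\<close>] by force
  qed
  have "l \<noteq> j" using l s0j by auto
  define b where "b = s 0 l"
  define B where "B = load n s l"
  have "b \<le> B" unfolding b_def B_def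
    using nonneg l(1) \<open>0 < n\<close> by (intro member_le_sum) auto
  have "0 < b" using l by (simp add: b_def)
  \<comment> \<open>Shifting \<open>e\<close> from \<open>l\<close> to the empty server \<open>j\<close> wins all of \<open>R\<^sub>j\<close>, at a cost vanishing with \<open>e\<close>.\<close>
  have "((\<lambda>e. R j - R l * (b / B - (b - e) / (B - e)))
      \<longlongrightarrow> R j - R l * (b / B - (b - 0) / (B - 0))) (at_right 0)"
    using \<open>b \<le> B\<close> \<open>0 < b\<close> by (intro tendsto_intros) auto
  then have "R j - R l * (b / B - (b - 0) / (B - 0)) \<le> 0"
  proof (rule nonpos_of_limit_at_right[OF _ \<open>0 < b\<close>])
    fix e :: real assume "0 < e" "e < b"
    then show "R j - R l * (b / B - (b - e) / (B - e)) \<le> 0"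
      using nash_eq_shift_le[OF N \<open>0 < n\<close> l(1) j \<open>l \<noteq> j\<close>, of e] s0j load0
      by (auto simp: b_def B_def)
  qed
  moreover have "0 < R j" using R j by blast
  ultimately show False by simp
qed

lemma nash_eq_marginal_utility_le:
  assumes N: "nash_eq n m R s" and i: "i < n" and R: "\<forall>j<m. 0 < R j"
    and j: "j < m" and k: "k < m" and "0 < s i j"
  shows "marginal_utility n R s i k \<le> marginal_utility n R s i j"
proof (cases "j = k")
  case False
  define a where "a = s i k"
  define A where "A = load n s k"
  define b where "b = s i j"
  define B where "B = load n s j"
  have "0 < A" unfolding A_def using nash_eq_load_pos[OF N _ R k] i by simp
  have "0 < b" using \<open>0 < s i j\<close> by (simp add: b_def)
  have "b \<le> B" unfolding b_def B_def
    using nash_eq_simplex(1)[OF N] i j by (intro member_le_sum) auto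
  have "((\<lambda>e. R k * (A - a) / (A * (A + e)) - R j * (B - b) / (B * (B - e)))
      \<longlongrightarrow> R k * (A - a) / (A * (A + 0)) - R j * (B - b) / (B * (B - 0))) (at_right 0)"
    using \<open>0 < A\<close> \<open>0 < b\<close> \<open>b \<le> B\<close> by (intro tendsto_intros) auto
  \<comment> \<open>Divide the no-profitable-shift inequality by \<open>e\<close> and let \<open>e \<rightarrow> 0\<close>.\<close>
  then have "R k * (A - a) / (A * (A + 0)) - R j * (B - b) / (B * (B - 0)) \<le> 0"
  proof (rule nonpos_of_limit_at_right[OF _ \<open>0 < b\<close>])
    fix e :: real assume e: "0 < e" "e < b"
    have "R k * ((a + e) / (A + e) - a / A) \<le> R j * (b / B - (b - e) / (B - e))"
      unfolding a_def A_def b_def B_def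
      using nash_eq_shift_le[OF N i j k False, of e] e by (simp add: b_def)
    moreover have "(a + e) / (A + e) - a / A = e * ((A - a) / (A * (A + e)))"
      using \<open>0 < A\<close> e by (simp add: field_simps)
    moreover have "b / B - (b - e) / (B - e) = e * ((B - b) / (B * (B - e)))"
      using \<open>b \<le> B\<close> e by (simp add: field_simps)
    ultimately have "e * (R k * (A - a) / (A * (A + e)) - R j * (B - b) / (B * (B - e))) \<le> 0"
      by (simp add: algebra_simps)
    then show "R k * (A - a) / (A * (A + e)) - R j * (B - b) / (B * (B - e)) \<le> 0"
      using e by (simp add: mult_le_0_iff)
  qed
  then show ?thesis
    unfolding marginal_utility_def power2_eq_square a_def A_def b_def B_def by simp
qed simp

lemma marginal_utility_strict_antimono:
  assumes "0 < R j" "0 < load n s j" "s i j < s i' j"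
  shows "marginal_utility n R s i' j < marginal_utility n R s i j"
  using assms unfolding marginal_utility_def
  by (intro divide_strict_right_mono mult_strict_left_mono) auto

lemma exists_greater_if_sum_eq:
  fixes f g :: "'a \<Rightarrow> 'b::{ordered_cancel_comm_monoid_add, linorder}"
  assumes "finite A" "sum f A = sum g A" "x \<in> A" "f x \<noteq> g x"
  shows "\<exists>j\<in>A. g j < f j"
proof (rule ccontr)
  assume "\<not> ?thesis"
  then have "\<forall>j\<in>A. f j \<le> g j" by auto
  moreover have "f x < g x" using calculation assms(3,4) by (simp add: order_le_neq_trans)
  ultimately have "sum f A < sum g A"
    using assms(1,3) by (intro sum_strict_mono_ex1) auto
  then show False using assms(2) by simp
qed

lemma nash_eq_players_agree:
  assumes N: "nash_eq n m R s" and R: "\<forall>j<m. 0 < R j"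
    and i: "i < n" and i': "i' < n" and l: "l < m"
  shows "s i l = s i' l"
proof (rule ccontr)
  assume "s i l \<noteq> s i' l"
  then obtain j k where j: "j < m" "s i' j < s i j" and k: "k < m" "s i k < s i' k"
    using exists_greater_if_sum_eq[of "{..<m}" "s i" "s i'" l]
      exists_greater_if_sum_eq[of "{..<m}" "s i'" "s i" l]
      nash_eq_simplex(2)[OF N i] nash_eq_simplex(2)[OF N i'] l by auto
  have "0 < s i j" "0 < s i' k"
    using j k nash_eq_simplex(1)[OF N i] nash_eq_simplex(1)[OF N i'] by force+
  have "marginal_utility n R s i k \<le> marginal_utility n R s i j"
    by (rule nash_eq_marginal_utility_le[OF N i R j(1) k(1) \<open>0 < s i j\<close>])
  also have "\<dots> < marginal_utility n R s i' j"
    using R j nash_eq_load_pos[OF N _ R j(1)] i by (intro marginal_utility_strict_antimono) auto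
  also have "\<dots> \<le> marginal_utility n R s i' k"
    by (rule nash_eq_marginal_utility_le[OF N i' R k(1) j(1) \<open>0 < s i' k\<close>])
  also have "\<dots> < marginal_utility n R s i k"
    using R k nash_eq_load_pos[OF N _ R k(1)] i by (intro marginal_utility_strict_antimono) auto
  finally show False .
qed

lemma load_symmetric:
  assumes "\<forall>q<n. s q l = x"
  shows "load n s l = real n * x"
  using assms by simp

lemma marginal_utility_symmetric:
  assumes "0 < n" "\<forall>q<n. s q l = x" "0 < x" "i < n"
  shows "marginal_utility n R s i l = (real n - 1) / (real n)\<^sup>2 * (R l / x)"
proof -
  have "s i l = x" using assms(2,4) by blast
  then show ?thesis
    unfolding marginal_utility_def load_symmetric[of n s l x, OF assms(2)] using assms(1,3)
    by (simp add: field_simps power2_eq_square)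
qed

lemma l1_normalize_pos:
  assumes "\<forall>j<m. 0 < R j"
  shows "l1_normalize m R j = R j / (\<Sum>k<m. R k)"
proof -
  have "(\<Sum>k<m. \<bar>R k\<bar>) = (\<Sum>k<m. R k)" using assms by (intro sum.cong) auto
  then show ?thesis unfolding l1_normalize_def by simp
qed

lemma eq_l1_normalize_if_ratios_le:
  fixes x R :: "nat \<Rightarrow> real"
  assumes R: "\<forall>j<m. 0 < R j" and x: "\<forall>j<m. 0 < x j" "(\<Sum>j<m. x j) = 1"
    and ratio: "\<And>k l. k < m \<Longrightarrow> l < m \<Longrightarrow> R k / x k \<le> R l / x l" and j: "j < m"
  shows "x j = l1_normalize m R j"
proof -
  define c where "c = R j / x j"
  have R_eq: "R l = c * x l" if "l < m" for l
  proof -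
    have "R l / x l = c" unfolding c_def by (rule antisym[OF ratio[OF that j] ratio[OF j that]])
    moreover have "0 < x l" using x(1) that by blast
    ultimately show ?thesis by (simp add: divide_eq_eq)
  qed
  have sum_R: "(\<Sum>k<m. R k) = c"
    using x(2) by (simp add: R_eq sum_distrib_left[symmetric])
  have "c \<noteq> 0" using R_eq[OF j] R j by auto
  then show ?thesis unfolding l1_normalize_pos[OF R] sum_R R_eq[OF j] by simp
qed

lemma nash_eq_imp_l1_normalize:
  assumes N: "nash_eq n m R s" and "2 \<le> n" and R: "\<forall>j<m. 0 < R j" and i: "i < n" and j: "j < m"
  shows "s i j = l1_normalize m R j"
proof -
  have "0 < n" using \<open>2 \<le> n\<close> by simp
  define x where "x = s 0"
  have agree: "\<forall>q<n. s q l = x l" if "l < m" for l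
    unfolding x_def using nash_eq_players_agree[OF N R _ \<open>0 < n\<close> that] by blast
  have x_pos: "0 < x l" if "l < m" for l
  proof -
    have "0 < load n s l" by (rule nash_eq_load_pos[OF N \<open>0 < n\<close> R that])
    then show ?thesis
      unfolding load_symmetric[of n s l "x l", OF agree[OF that]] by (simp add: zero_less_mult_iff)
  qed
  have marginal: "marginal_utility n R s 0 l = (real n - 1) / (real n)\<^sup>2 * (R l / x l)"
    if "l < m" for l
    by (rule marginal_utility_symmetric[where s = s and l = l and x = "x l",
          OF \<open>0 < n\<close> agree[OF that] x_pos[OF that] \<open>0 < n\<close>])
  have "x j = l1_normalize m R j"
  proof (rule eq_l1_normalize_if_ratios_le[OF R _ _ _ j])
    show "\<forall>l<m. 0 < x l" using x_pos by blast
    show "(\<Sum>l<m. x l) = 1" using nash_eq_simplex(2)[OF N \<open>0 < n\<close>] by (simp add: x_def)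
  next
    fix k l assume k: "k < m" and l: "l < m"
    have "marginal_utility n R s 0 k \<le> marginal_utility n R s 0 l"
      using nash_eq_marginal_utility_le[OF N \<open>0 < n\<close> R l k] x_pos[OF l] by (simp add: x_def)
    moreover have "0 < (real n - 1) / (real n)\<^sup>2" using \<open>2 \<le> n\<close> by simp
    ultimately show "R k / x k \<le> R l / x l"
      unfolding marginal[OF k] marginal[OF l] by (rule mult_left_le_imp_le)
  qed
  moreover have "s i j = x j" using agree[OF j] i by simp
  ultimately show ?thesis by simp
qed

text \<open>The right-hand side is the tangent at \<open>x = r\<close> of the concave map \<open>x \<mapsto> r x / (c r + x)\<close>.\<close>
lemma share_le_tangent:
  fixes c r x :: real
  assumes "0 < c" "0 < r" "0 \<le> x"
  shows "r * (x / (c * r + x)) \<le> (r + c * x) / (c + 1)\<^sup>2"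
proof -
  have "(r + c * x) * (c * r + x) - r * x * (c + 1)\<^sup>2 = c * (r - x)\<^sup>2"
    by (simp add: power2_eq_square algebra_simps)
  moreover have "0 \<le> c * (r - x)\<^sup>2" using assms by simp
  ultimately have "r * x * (c + 1)\<^sup>2 \<le> (r + c * x) * (c * r + x)" by linarith
  moreover have "0 < c * r + x" using assms by (simp add: add_pos_nonneg)
  ultimately show ?thesis using assms by (simp add: field_simps)
qed

lemma simplex_l1_normalize:
  assumes "0 < m" "\<forall>j<m. 0 < R j"
  shows "simplex m (l1_normalize m R)"
proof -
  have "0 < (\<Sum>k<m. R k)" using assms by (intro sum_pos) auto
  then show ?thesis
    unfolding simplex_iff_nonneg_sum l1_normalize_pos[OF assms(2)]
    using assms(2) by (simp add: sum_divide_distrib[symmetric] less_imp_le)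
qed

lemma nash_eq_l1_normalize:
  assumes "2 \<le> n" "0 < m" and R: "\<forall>j<m. 0 < R j"
  shows "nash_eq n m R (\<lambda>_. l1_normalize m R)"
proof -
  define S where "S = (\<Sum>k<m. R k)"
  define r where "r = l1_normalize m R"
  define c where "c = real n - 1"
  have "0 < S" unfolding S_def using assms(2) R by (intro sum_pos) auto
  have r: "simplex m r" unfolding r_def by (rule simplex_l1_normalize[OF assms(2) R])
  have r_eq: "r j = R j / S" if "j < m" for j
    unfolding r_def S_def by (rule l1_normalize_pos[OF R])
  have r_pos: "0 < r j" if "j < m" for j
    using R that \<open>0 < S\<close> by (simp add: r_eq)
  have R_eq: "R j = S * r j" if "j < m" for j
    using \<open>0 < S\<close> that by (simp add: r_eq)
  have "0 < c" using assms(1) by (simp add: c_def)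
  have "utility n m R ((\<lambda>_. r)(i := t)) i \<le> utility n m R (\<lambda>_. r) i"
    if i: "i < n" and t: "simplex m t" for i t
  proof -
    have t_nonneg: "0 \<le> t j" if "j < m" for j
      using t that by (simp add: simplex_def)
    have "utility n m R ((\<lambda>_. r)(i := t)) i = (\<Sum>j<m. S * (r j * (t j / (c * r j + t j))))"
      unfolding utility_fun_upd[OF i]
      by (intro sum.cong refl) (simp add: R_eq c_def algebra_simps)
    also have "\<dots> \<le> (\<Sum>j<m. S * ((r j + c * t j) / (c + 1)\<^sup>2))"
      using \<open>0 < S\<close> \<open>0 < c\<close> r_pos t_nonneg
      by (intro sum_mono mult_left_mono share_le_tangent) auto
    also have "\<dots> = S / (c + 1)\<^sup>2 * ((\<Sum>j<m. r j) + c * (\<Sum>j<m. t j))"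
      by (simp add: sum_distrib_left sum.distrib add_divide_distrib sum_divide_distrib algebra_simps)
    also have "\<dots> = S / real n"
      using r t \<open>0 < c\<close> by (simp add: simplex_def c_def power2_eq_square)
    also have "\<dots> = utility n m R (\<lambda>_. r) i"
      unfolding utility_def S_def sum_divide_distrib
      using r_pos by (intro sum.cong refl) (simp add: less_imp_neq[symmetric])
    finally show ?thesis .
  qed
  then show ?thesis using r unfolding nash_eq_def r_def by blast
qed

theorem mainTheorem1:
  fixes n m :: nat and R :: "nat \<Rightarrow> real"
  assumes "n \<ge> 2" and "m \<ge> 2"
    and "\<forall>j<m. 0 < R j \<and> R j \<le> 1"
  shows "nash_eq n m R (\<lambda>i. l1_normalize m R)
         \<and> (\<forall>s. nash_eq n m R s \<longrightarrow> (\<forall>i<n. \<forall>j<m. s i j = l1_normalize m R j))"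
proof -
  have R: "\<forall>j<m. 0 < R j" using assms(3) by simp
  show ?thesis
    using nash_eq_l1_normalize[OF assms(1) _ R] nash_eq_imp_l1_normalize[OF _ assms(1) R] assms(2)
    by auto
qed

end
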